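(* For all $M,N\ge 0$, the labeling $\Lambda$ is an $S$-labeling of the poset of shuffles $W_{MN}$.
   Context: Let $P$ be a finite ranked poset with $\hat0,\hat1$, of rank $n$, and let $\mathcal{M}(P)$ be its set of maximal chains. A labeling is a map $\Lambda:\mathcal{M}(P)\to L^n$, $L$ a totally ordered set. It is an $S$-labeling if it is injective and, for every maximal chain $c=(\hat0=w^0\lessdot\cdots\lessdot w^n=\hat1)$ and every $i\in[n-1]$ with $\Lambda_i(c)\ne\Lambda_{i+1}(c)$, there is a unique maximal chain $c'$ differing from $c$ only in the element of rank $i$ such that $\Lambda(c')$ is obtained from $\Lambda(c)$ by interchanging the entries in positions $i$ and $i+1$. Poset of shuffles: let $\mathcal{A}=\{a_1,\dots,a_M\}$, $\mathcal{X}=\{x_1,\dots,x_N\}$ be disjoint sets; a shuffle word is a word (possibly empty) with distinct letters from $\mathcal{A}\cup\mathcal{X}$ in which the letters of each alphabet appear in increasing order of subscripts; $W_{MN}$ is the set of shuffle words ordered by the reflexive-transitive closure of: $w\lessdot w'$ iff $w'$ is obtained from $w$ by deleting a letter of $\mathcal{A}$ or inserting a letter of $\mathcal{X}$; $\hat0=a_1\cdots a_M$, $\hat1=x_1\cdots x_N$, rank $M+N$. The labeling $\Lambda$: for a maximal chain $c=(\hat0=w^0\lessdot\cdots\lessdot w^{M+N}=\hat1)$, $\Lambda_{i+1}(c)$ is: $x_k$ if $w^{i+1}$ is obtained from $w^i$ by inserting $x_k$; $x_k$ if $w^i=u\,x_k\,a_m\,v$, $w^{i+1}=u\,x_k\,v$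 and this is the first deletion along $c$, starting from $\hat0$, of a letter located immediately after $x_k$ (type (xa)); $a_j$ if $w^{i+1}$ is obtained by deleting $a_j$ and this is not of type (xa). *)

theory Defs
  imports Main
begin

text \<open>A maximal chain of a ranked poset of rank n is represented as a list
  [w0, ..., wn] of length n+1 (index = rank).  A labeling maps each maximal
  chain to a list of labels of length n; the (1-based) label Lambda_i(c) is the
  list entry at index i-1.\<close>

definition is_labeling :: "'p list set \<Rightarrow> nat \<Rightarrow> ('p list \<Rightarrow> 'l list) \<Rightarrow> bool" where
  "is_labeling Ch n Lam \<longleftrightarrow> (\<forall>c\<in>Ch. length (Lam c) = n)"

definition S_labeling :: "'p list set \<Rightarrow> nat \<Rightarrow> ('p list \<Rightarrow> 'l list) \<Rightarrow> bool" where
  "S_labeling Ch n Lam \<longleftrightarrow>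
     is_labeling Ch n Lam \<and>
     inj_on Lam Ch \<and>
     (\<forall>c\<in>Ch. \<forall>i\<in>{1..n-1}.
        Lam c ! (i-1) \<noteq> Lam c ! i \<longrightarrow>
        (\<exists>!c'. c' \<in> Ch \<and> (\<forall>j\<le>n. j \<noteq> i \<longrightarrow> c' ! j = c ! j) \<and>
              Lam c' = (Lam c)[i-1 := Lam c ! i, i := Lam c ! (i-1)]))"

text \<open>Letters: A j stands for a_j, X k stands for x_k; the two alphabets are
  disjoint by construction.\<close>

datatype letter = A nat | X nat

fun is_A :: "letter \<Rightarrow> bool" where
  "is_A (A _) = True" | "is_A (X _) = False"

fun is_X :: "letter \<Rightarrow> bool" where
  "is_X (A _) = False" | "is_X (X _) = True"

fun sub :: "letter \<Rightarrow> nat" where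
  "sub (A j) = j" | "sub (X k) = k"

definition shuffle_word :: "nat \<Rightarrow> nat \<Rightarrow> letter list \<Rightarrow> bool" where
  "shuffle_word M N w \<longleftrightarrow>
     distinct w \<and>
     set w \<subseteq> {A j | j. 1 \<le> j \<and> j \<le> M} \<union> {X k | k. 1 \<le> k \<and> k \<le> N} \<and>
     sorted_wrt (<) (map sub (filter is_A w)) \<and>
     sorted_wrt (<) (map sub (filter is_X w))"

definition shuffle_cover :: "nat \<Rightarrow> nat \<Rightarrow> letter list \<Rightarrow> letter list \<Rightarrow> bool" where
  "shuffle_cover M N w w' \<longleftrightarrow>
     shuffle_word M N w \<and> shuffle_word M N w' \<and>
     ((\<exists>u v j. w = u @ [A j] @ v \<and> w' = u @ v) \<or>
      (\<exists>u v k. w = u @ v \<and> w' = u @ [X k] @ v))"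

definition shuffle_le :: "nat \<Rightarrow> nat \<Rightarrow> letter list \<Rightarrow> letter list \<Rightarrow> bool" where
  "shuffle_le M N = (shuffle_cover M N)\<^sup>*\<^sup>*"

definition shuffle_bot :: "nat \<Rightarrow> letter list" where
  "shuffle_bot M = map A [1..<M+1]"

definition shuffle_top :: "nat \<Rightarrow> letter list" where
  "shuffle_top N = map X [1..<N+1]"

definition shuffle_chains :: "nat \<Rightarrow> nat \<Rightarrow> letter list list set" where
  "shuffle_chains M N =
     {c. length c = M + N + 1 \<and> c ! 0 = shuffle_bot M \<and> c ! (M + N) = shuffle_top N \<and>
         (\<forall>i < M + N. shuffle_cover M N (c ! i) (c ! Suc i))}"

text \<open>Step i of chain c goes from c!i to c!(i+1); its label is Lambda_(i+1)(c).\<close>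

definition ins_step :: "letter list list \<Rightarrow> nat \<Rightarrow> letter \<Rightarrow> bool" where
  "ins_step c i x \<longleftrightarrow> is_X x \<and> (\<exists>u v. c ! i = u @ v \<and> c ! Suc i = u @ [x] @ v)"

definition del_step :: "letter list list \<Rightarrow> nat \<Rightarrow> letter \<Rightarrow> bool" where
  "del_step c i y \<longleftrightarrow> is_A y \<and> (\<exists>u v. c ! i = u @ [y] @ v \<and> c ! Suc i = u @ v)"

definition xa_step :: "letter list list \<Rightarrow> nat \<Rightarrow> nat \<Rightarrow> bool" where
  "xa_step c i k \<longleftrightarrow> (\<exists>u v m. c ! i = u @ [X k, A m] @ v \<and> c ! Suc i = u @ [X k] @ v)"

definition shuffle_label_at :: "letter list list \<Rightarrow> nat \<Rightarrow> letter" where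
  "shuffle_label_at c i =
     (if \<exists>x. ins_step c i x then (THE x. ins_step c i x)
      else if \<exists>k. xa_step c i k \<and> (\<forall>j<i. \<not> xa_step c j k)
           then X (THE k. xa_step c i k)
      else (THE y. del_step c i y))"

definition shuffle_labeling :: "letter list list \<Rightarrow> letter list" where
  "shuffle_labeling c = map (shuffle_label_at c) [0..<length c - 1]"

end

theory Submission
  imports Defs "HOL-Library.Multiset"
begin

text \<open>
  The label of a step of a maximal chain depends only on the two words and on the set F of
  indices k for which a letter standing right after x_k has already been deleted. If two
  consecutive steps have different labels, a case analysis on the kinds (deletion or insertion)
  and the relative positions of the two letters involved yields a middle word giving the
  interchanged labels and leaving F unchanged after the two steps; conversely, two consecutive
  labels determine the middle word. Injectivity follows by induction on the number of inversions
  of the label sequence with respect to a < x_1 < x_2 < ...: a descent is removed by the same swap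
  in both chains. For a weakly increasing label sequence, at the first step where two chains
  differ both insert the same x_k; an a-letter in front of x_k would later be deleted with a label
  below x_k, so only x-letters precede x_k, and this forces its position.
\<close>

lemma distinct_split_unique:
  assumes "distinct (u @ a # v)" and "u @ a # v = u' @ a # v'"
  shows "u = u' \<and> v = v'"
proof -
  have "distinct (u' @ a # v')"
    using assms by metis
  then have "a \<notin> set u" "a \<notin> set u'"
    using assms(1) by auto
  then have "takeWhile (\<lambda>z. z \<noteq> a) (u @ a # v) = u" "takeWhile (\<lambda>z. z \<noteq> a) (u' @ a # v') = u'"
    by (auto simp: takeWhile_tail)
  then show ?thesis using assms(2) by auto
qed

lemma distinct_remove_unique:
  assumes "distinct (u @ [a] @ v)" and "u @ [a] @ v = u' @ [a'] @ v'" and "u @ v = u' @ v'"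
  shows "u = u' \<and> a = a' \<and> v = v'"
proof -
  have "distinct (u' @ [a'] @ v')"
    using assms(1,2) by metis
  then have "a \<notin> set (u @ v)" "a' \<notin> set (u' @ v')"
    using assms(1) by auto
  moreover have "insert a (set (u @ v)) = insert a' (set (u' @ v'))"
    using arg_cong[OF assms(2), of set] by auto
  ultimately have "a = a'" using assms(3) by auto
  then show ?thesis using distinct_split_unique[of u a v u' v'] assms(1,2) by simp
qed

lemma append_eq_append_Cons_cases:
  assumes "u @ v = p @ b # q"
  obtains (left) r where "u = p @ b # r" "q = r @ v"
        | (right) r where "p = u @ r" "v = r @ b # q"
proof -
  from assms obtain us where "u = p @ us \<and> us @ v = b # q \<or> u @ us = p \<and> v = us @ b # q"
    unfolding append_eq_append_conv2 by blast
  then show thesis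
    by (metis Cons_eq_append_conv append_Nil2 left right)
qed

lemma append_eq_append_cases:
  assumes "u @ v = s @ t"
  obtains (left) r where "u = s @ r" "t = r @ v" "r \<noteq> []"
        | (right) r where "s = u @ r" "v = r @ t"
proof -
  from assms obtain r where "u = s @ r \<and> r @ v = t \<or> u @ r = s \<and> v = r @ t"
    unfolding append_eq_append_conv2 by blast
  then show thesis using left right by (cases "r = []") auto
qed

lemma removeAll_moved_letter:
  assumes d: "distinct (s @ [x] @ r @ t)" and r: "r \<noteq> []" and a: "a \<noteq> x"
    and eq: "removeAll a (s @ [x] @ r @ t) = removeAll a (s @ r @ [x] @ t)"
  shows "r = [a]"
proof -
  have moved: "x # removeAll a r @ removeAll a t = removeAll a r @ x # removeAll a t"
    using eq a by simp
  have "removeAll a r = []"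
  proof (rule ccontr)
    assume "removeAll a r \<noteq> []"
    then obtain y r' where r': "removeAll a r = y # r'"
      by (cases "removeAll a r") auto
    then have "x \<in> set (removeAll a r)"
      using moved by simp
    then show False using d by simp
  qed
  then have "set r \<subseteq> {a}"
    by (metis Diff_eq_empty_iff empty_set set_removeAll)
  then show ?thesis
    using r d by (cases r) (auto simp: subset_singleton_iff)
qed

lemma shuffle_word_distinct: "shuffle_word M N w \<Longrightarrow> distinct w"
  unfolding shuffle_word_def by simp

lemma shuffle_word_remove: "shuffle_word M N (u @ [y] @ v) \<Longrightarrow> shuffle_word M N (u @ v)"
  unfolding shuffle_word_def by (auto simp: sorted_wrt_append)

lemma shuffle_word_X_order: "shuffle_word M N (p @ [X m] @ q @ [X k] @ r) \<Longrightarrow> m < k"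
  unfolding shuffle_word_def by (simp add: sorted_wrt_append)

lemma shuffle_word_merge:
  assumes "shuffle_word M N w1" and "shuffle_word M N w2"
    and "filter is_A w = filter is_A w1" and "filter is_X w = filter is_X w2"
    and "distinct w" and "set w \<subseteq> set w1 \<union> set w2"
  shows "shuffle_word M N w"
  using assms unfolding shuffle_word_def by auto

lemma shuffle_cover_words:
  assumes "shuffle_cover M N w w'"
  shows "shuffle_word M N w" and "shuffle_word M N w'"
  using assms unfolding shuffle_cover_def by simp_all

lemma shuffle_cover_cases:
  assumes "shuffle_cover M N w w'"
  obtains (delete) u j v where "w = u @ [A j] @ v" "w' = u @ v" "shuffle_word M N (u @ [A j] @ v)"
        | (insert) u k v where "w = u @ v" "w' = u @ [X k] @ v" "shuffle_word M N (u @ [X k] @ v)"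
  using assms unfolding shuffle_cover_def by metis

lemma shuffle_cover_removeAll_cases:
  assumes "shuffle_cover M N w w'"
  obtains (delete) j where "A j \<in> set w" "w' = removeAll (A j) w"
        | (insert) k where "X k \<in> set w'" "w = removeAll (X k) w'"
  using assms
proof (cases rule: shuffle_cover_cases)
  case (delete u j v)
  then show thesis using that(1)[of j] shuffle_word_distinct[OF delete(3)] by simp
next
  case (insert u k v)
  then show thesis using that(2)[of k] shuffle_word_distinct[OF insert(3)] by simp
qed

lemma shuffle_cover_X_mem: "shuffle_cover M N w w' \<Longrightarrow> X k \<in> set w \<Longrightarrow> X k \<in> set w'"
  by (erule shuffle_cover_cases) auto

lemma shuffle_cover_A_mem: "shuffle_cover M N w w' \<Longrightarrow> A j \<in> set w' \<Longrightarrow> A j \<in> set w"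
  by (erule shuffle_cover_cases) auto

lemma shuffle_cover_filter_eq:
  assumes "shuffle_cover M N w w'" and "\<And>z. z \<in> set w \<union> set w' \<Longrightarrow> P z \<Longrightarrow> z \<in> set w \<inter> set w'"
  shows "filter P w' = filter P w"
  using assms(1)
proof (cases rule: shuffle_cover_cases)
  case (delete u j v)
  then have "\<not> P (A j)" using assms(2)[of "A j"] shuffle_word_distinct[OF delete(3)] by auto
  then show ?thesis using delete by simp
next
  case (insert u k v)
  then have "\<not> P (X k)" using assms(2)[of "X k"] shuffle_word_distinct[OF insert(3)] by auto
  then show ?thesis using insert by simp
qed

definition trailing_x :: "letter list \<Rightarrow> nat option" where
  "trailing_x u = (if u = [] then None else case last u of X k \<Rightarrow> Some k | A _ \<Rightarrow> None)"

lemma trailing_x_snoc_X [simp]: "trailing_x (u @ [X k]) = Some k"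
  by (simp add: trailing_x_def)

lemma trailing_x_snoc_A [simp]: "trailing_x (u @ [A j]) = None"
  by (simp add: trailing_x_def)

lemma trailing_x_append: "v \<noteq> [] \<Longrightarrow> trailing_x (u @ v) = trailing_x v"
  by (simp add: trailing_x_def)

lemma trailing_x_Cons: "v \<noteq> [] \<Longrightarrow> trailing_x (y # v) = trailing_x v"
  using trailing_x_append[of v "[y]"] by simp

lemma trailing_x_SomeD: "trailing_x u = Some k \<Longrightarrow> \<exists>u'. u = u' @ [X k]"
  by (cases u rule: rev_cases) (auto simp: trailing_x_def split: letter.splits)

lemma trailing_x_mem: "trailing_x u = Some k \<Longrightarrow> X k \<in> set u"
  using trailing_x_SomeD by fastforce

definition del_label :: "nat set \<Rightarrow> letter list \<Rightarrow> letter \<Rightarrow> letter" where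
  "del_label F u a = (case trailing_x u of Some k \<Rightarrow> if k \<in> F then a else X k | None \<Rightarrow> a)"

lemma del_label_None: "trailing_x u = None \<Longrightarrow> del_label F u a = a"
  by (simp add: del_label_def)

lemma del_label_X: "k \<notin> F \<Longrightarrow> del_label F (u @ [X k]) a = X k"
  by (simp add: del_label_def)

lemma del_label_cases:
  obtains "del_label F u a = a" | k where "trailing_x u = Some k" "del_label F u a = X k"
proof (cases "trailing_x u")
  case (Some k)
  then show ?thesis using that by (cases "k \<in> F") (auto simp: del_label_def)
qed (use that in \<open>simp add: del_label_def\<close>)

lemma del_label_mem: "del_label F u a \<in> set (u @ [a])"
  by (cases rule: del_label_cases[of F u a]) (auto dest: trailing_x_mem)

lemma del_label_union_own: "del_label (F \<union> set_option (trailing_x u)) u a = a"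
  unfolding del_label_def by (auto split: option.splits)

text \<open>step_label makes the label of shuffle_label_at a function of a single step; the history of
  the chain enters only through the set F of indices k whose (xa) deletion has already occurred.\<close>

definition xa_indices :: "letter list \<Rightarrow> letter list \<Rightarrow> nat set" where
  "xa_indices w w' = {k. \<exists>u v m. w = u @ [X k, A m] @ v \<and> w' = u @ [X k] @ v}"

definition xa_before :: "letter list list \<Rightarrow> nat \<Rightarrow> nat set" where
  "xa_before c t = {k. \<exists>j<t. xa_step c j k}"

definition step_label :: "nat set \<Rightarrow> letter list \<Rightarrow> letter list \<Rightarrow> letter" where
  "step_label F w w' =
     (if \<exists>x. is_X x \<and> (\<exists>u v. w = u @ v \<and> w' = u @ [x] @ v)
      then (THE x. is_X x \<and> (\<exists>u v. w = u @ v \<and> w' = u @ [x] @ v))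
      else if \<exists>k. k \<in> xa_indices w w' \<and> k \<notin> F then X (THE k. k \<in> xa_indices w w')
      else (THE y. is_A y \<and> (\<exists>u v. w = u @ [y] @ v \<and> w' = u @ v)))"

lemma shuffle_label_at_eq_step_label:
  "shuffle_label_at c t = step_label (xa_before c t) (c ! t) (c ! Suc t)"
proof -
  have ins: "ins_step c t = (\<lambda>x. is_X x \<and> (\<exists>u v. c ! t = u @ v \<and> c ! Suc t = u @ [x] @ v))"
    and xa: "xa_step c t = (\<lambda>k. k \<in> xa_indices (c ! t) (c ! Suc t))"
    and del: "del_step c t = (\<lambda>y. is_A y \<and> (\<exists>u v. c ! t = u @ [y] @ v \<and> c ! Suc t = u @ v))"
    by (simp_all add: fun_eq_iff ins_step_def xa_step_def xa_indices_def del_step_def)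
  have "(\<forall>j<t. \<not> xa_step c j k) \<longleftrightarrow> k \<notin> xa_before c t" for k
    by (simp add: xa_before_def)
  then show ?thesis
    unfolding shuffle_label_at_def step_label_def ins xa del by (simp only:)
qed

lemma xa_before_0 [simp]: "xa_before c 0 = {}"
  by (simp add: xa_before_def)

lemma xa_before_Suc: "xa_before c (Suc t) = xa_before c t \<union> xa_indices (c ! t) (c ! Suc t)"
  unfolding xa_before_def xa_indices_def xa_step_def by (auto simp: less_Suc_eq)

lemma xa_before_cong:
  assumes "\<And>j. j \<le> t \<Longrightarrow> c ! j = d ! j"
  shows "xa_before c t = xa_before d t"
proof -
  have "xa_step c j = xa_step d j" if "j < t" for j
    using assms[of j] assms[of "Suc j"] that by (simp add: xa_step_def fun_eq_iff)
  then show ?thesis by (auto simp: xa_before_def)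
qed

lemma xa_indices_X_mem: "k \<in> xa_indices w w' \<Longrightarrow> X k \<in> set w'"
  unfolding xa_indices_def by auto

lemma insertion_step:
  assumes sw: "shuffle_word M N (u @ [X k] @ v)"
  shows "shuffle_cover M N (u @ v) (u @ [X k] @ v)"
    and "step_label F (u @ v) (u @ [X k] @ v) = X k"
    and "xa_indices (u @ v) (u @ [X k] @ v) = {}"
proof -
  show "shuffle_cover M N (u @ v) (u @ [X k] @ v)"
    unfolding shuffle_cover_def using sw shuffle_word_remove[OF sw] by blast
  have "x = X k" if "u @ v = p @ q" "u @ [X k] @ v = p @ [x] @ q" for x p q
  proof -
    have "distinct (p @ [x] @ q)"
      using shuffle_word_distinct[OF sw] unfolding that(2) .
    then have "x \<notin> set (u @ v)"
      unfolding that(1) by simp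
    moreover have "x \<in> set (u @ [X k] @ v)"
      unfolding that(2) by simp
    ultimately show ?thesis by auto
  qed
  then have "(THE x. is_X x \<and> (\<exists>p q. u @ v = p @ q \<and> u @ [X k] @ v = p @ [x] @ q)) = X k"
    by (intro the_equality) auto
  moreover have "\<exists>x. is_X x \<and> (\<exists>p q. u @ v = p @ q \<and> u @ [X k] @ v = p @ [x] @ q)"
    by (intro exI[of _ "X k"]) auto
  ultimately show "step_label F (u @ v) (u @ [X k] @ v) = X k"
    unfolding step_label_def by simp
  show "xa_indices (u @ v) (u @ [X k] @ v) = {}"
  proof (safe)
    fix l assume "l \<in> xa_indices (u @ v) (u @ [X k] @ v)"
    then obtain p q m where "u @ v = p @ [X l, A m] @ q" "u @ [X k] @ v = p @ [X l] @ q"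
      unfolding xa_indices_def by blast
    from this[THEN arg_cong[where f = length]] show "l \<in> {}" by simp
  qed
qed

lemma xa_indices_deletion:
  assumes d: "distinct (u @ [A j] @ v)"
  shows "xa_indices (u @ [A j] @ v) (u @ v) = set_option (trailing_x u)"
proof -
  have "k \<in> xa_indices (u @ [A j] @ v) (u @ v) \<longleftrightarrow> trailing_x u = Some k" for k
  proof
    assume "k \<in> xa_indices (u @ [A j] @ v) (u @ v)"
    then obtain p q m where pq: "u @ [A j] @ v = (p @ [X k]) @ [A m] @ q" "u @ v = (p @ [X k]) @ q"
      unfolding xa_indices_def by auto
    then show "trailing_x u = Some k" using distinct_remove_unique[OF d pq] by simp
  next
    assume "trailing_x u = Some k"
    then obtain u' where "u = u' @ [X k]" by (blast dest: trailing_x_SomeD)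
    then show "k \<in> xa_indices (u @ [A j] @ v) (u @ v)"
      unfolding xa_indices_def by (intro CollectI exI[of _ u'] exI[of _ v] exI[of _ j]) simp
  qed
  then show ?thesis by auto
qed

lemma deletion_step:
  assumes sw: "shuffle_word M N (u @ [A j] @ v)"
  shows "shuffle_cover M N (u @ [A j] @ v) (u @ v)"
    and "xa_indices (u @ [A j] @ v) (u @ v) = set_option (trailing_x u)"
    and "step_label F (u @ [A j] @ v) (u @ v) = del_label F u (A j)"
proof -
  have d: "distinct (u @ [A j] @ v)" using shuffle_word_distinct[OF sw] .
  show "shuffle_cover M N (u @ [A j] @ v) (u @ v)"
    unfolding shuffle_cover_def using sw shuffle_word_remove[OF sw] by blast
  show xa: "xa_indices (u @ [A j] @ v) (u @ v) = set_option (trailing_x u)"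
    using xa_indices_deletion[OF d] .
  have no_ins: "\<not> (\<exists>x. is_X x \<and> (\<exists>p q. u @ [A j] @ v = p @ q \<and> u @ v = p @ [x] @ q))"
  proof
    assume "\<exists>x. is_X x \<and> (\<exists>p q. u @ [A j] @ v = p @ q \<and> u @ v = p @ [x] @ q)"
    then obtain x p q where "u @ [A j] @ v = p @ q" "u @ v = p @ [x] @ q" by blast
    from this[THEN arg_cong[where f = length]] show False by simp
  qed
  have "(THE y. is_A y \<and> (\<exists>p q. u @ [A j] @ v = p @ [y] @ q \<and> u @ v = p @ q)) = A j"
    using distinct_remove_unique[OF d] by (intro the_equality) auto
  then show "step_label F (u @ [A j] @ v) (u @ v) = del_label F u (A j)"
    unfolding step_label_def del_label_def using no_ins xa by (auto split: option.splits)
qed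

section \<open>Interchanging two consecutive labels\<close>

text \<open>w' may replace w1 in the steps w0, w1, w2: the two labels get interchanged, and the indices
  of (xa) deletions performed by the two steps are the same, so all later labels stay unchanged.\<close>

definition swapped_middle ::
    "nat \<Rightarrow> nat \<Rightarrow> nat set \<Rightarrow> letter list \<Rightarrow> letter list \<Rightarrow> letter list \<Rightarrow> letter list \<Rightarrow> bool" where
  "swapped_middle M N F w0 w1 w2 w' \<longleftrightarrow>
     shuffle_cover M N w0 w1 \<and> shuffle_cover M N w1 w2 \<and>
     shuffle_cover M N w0 w' \<and> shuffle_cover M N w' w2 \<and>
     step_label F w0 w' = step_label (F \<union> xa_indices w0 w1) w1 w2 \<and>
     step_label (F \<union> xa_indices w0 w') w' w2 = step_label F w0 w1 \<and>
     xa_indices w0 w' \<union> xa_indices w' w2 = xa_indices w0 w1 \<union> xa_indices w1 w2"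

lemma swapped_middle_sym:
  "swapped_middle M N F w0 w' w2 w1 \<Longrightarrow> swapped_middle M N F w0 w1 w2 w'"
  unfolding swapped_middle_def by auto

lemma swapped_middle_del_del:
  assumes sw: "shuffle_word M N (u @ [A i] @ r @ [A j] @ q)"
  shows "swapped_middle M N F (u @ [A i] @ r @ [A j] @ q) (u @ r @ [A j] @ q) (u @ r @ q) (u @ [A i] @ r @ q)"
proof -
  have sw1: "shuffle_word M N (u @ r @ [A j] @ q)" and sw': "shuffle_word M N (u @ [A i] @ r @ q)"
    using shuffle_word_remove[of M N u "A i" "r @ [A j] @ q"]
      shuffle_word_remove[of M N "u @ [A i] @ r" "A j" q] sw
    by simp_all
  note steps = deletion_step[of M N u i "r @ [A j] @ q"] deletion_step[of M N "u @ r" j q]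
    deletion_step[of M N "u @ [A i] @ r" j q] deletion_step[of M N u i "r @ q"]
  have no_common: "trailing_x u \<noteq> Some k" if "trailing_x r = Some k" for k
    using sw[THEN shuffle_word_distinct] trailing_x_mem[OF that] trailing_x_mem[of u k] by auto
  show ?thesis
  proof (cases "r = []")
    case True
    then show ?thesis
      unfolding swapped_middle_def using steps sw sw1 sw'
      by (simp add: del_label_None del_label_union_own)
  next
    case False
    then have "trailing_x (u @ [A i] @ r) = trailing_x r" "trailing_x (u @ r) = trailing_x r"
      by (simp_all add: trailing_x_append trailing_x_Cons)
    with no_common show ?thesis
      unfolding swapped_middle_def using steps sw sw1 sw'
      by (auto simp: del_label_def split: option.splits)
  qed
qed

lemma swapped_middle_ins_ins:
  assumes sw: "shuffle_word M N (p @ [X l] @ r @ [X k] @ t)"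
  shows "swapped_middle M N F (p @ r @ t) (p @ r @ [X k] @ t) (p @ [X l] @ r @ [X k] @ t) (p @ [X l] @ r @ t)"
proof -
  have sw1: "shuffle_word M N (p @ r @ [X k] @ t)" and sw': "shuffle_word M N (p @ [X l] @ r @ t)"
    using shuffle_word_remove[of M N p "X l" "r @ [X k] @ t"]
      shuffle_word_remove[of M N "p @ [X l] @ r" "X k" t] sw
    by simp_all
  show ?thesis
    unfolding swapped_middle_def
    using insertion_step[of M N "p @ r" k t] insertion_step[of M N p l "r @ [X k] @ t"]
      insertion_step[of M N p l "r @ t"] insertion_step[of M N "p @ [X l] @ r" k t] sw sw1 sw'
    by simp
qed

lemma swapped_middle_ins_del_left:
  assumes sw: "shuffle_word M N (u @ [A j] @ r @ [X k] @ t)"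
  shows "swapped_middle M N F (u @ [A j] @ r @ t) (u @ [A j] @ r @ [X k] @ t) (u @ r @ [X k] @ t) (u @ r @ t)"
proof -
  have sw0: "shuffle_word M N (u @ [A j] @ r @ t)" and sw2: "shuffle_word M N (u @ r @ [X k] @ t)"
    using shuffle_word_remove[of M N "u @ [A j] @ r" "X k" t]
      shuffle_word_remove[of M N u "A j" "r @ [X k] @ t"] sw
    by simp_all
  show ?thesis
    unfolding swapped_middle_def
    using insertion_step[of M N "u @ [A j] @ r" k t] deletion_step[of M N u j "r @ [X k] @ t"]
      deletion_step[of M N u j "r @ t"] insertion_step[of M N "u @ r" k t] sw sw0 sw2
    by simp
qed

lemma swapped_middle_ins_del_right:
  assumes sw: "shuffle_word M N (s @ [X k] @ r @ [A j] @ v)" and r: "r \<noteq> []"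
  shows "swapped_middle M N F (s @ r @ [A j] @ v) (s @ [X k] @ r @ [A j] @ v) (s @ [X k] @ r @ v) (s @ r @ v)"
proof -
  have sw0: "shuffle_word M N (s @ r @ [A j] @ v)" and sw2: "shuffle_word M N (s @ [X k] @ r @ v)"
    using shuffle_word_remove[of M N s "X k" "r @ [A j] @ v"]
      shuffle_word_remove[of M N "s @ [X k] @ r" "A j" v] sw
    by simp_all
  have "trailing_x (s @ [X k] @ r) = trailing_x (s @ r)"
    using r by (simp add: trailing_x_append trailing_x_Cons)
  then show ?thesis
    unfolding swapped_middle_def
    using insertion_step[of M N s k "r @ [A j] @ v"] deletion_step[of M N "s @ [X k] @ r" j v]
      deletion_step[of M N "s @ r" j v] insertion_step[of M N s k "r @ v"] sw sw0 sw2
    by (simp add: del_label_def)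
qed

lemma exists_swapped_middle_del_del:
  assumes sw: "shuffle_word M N (u @ [A j] @ v)" and eq: "u @ v = p @ [A i] @ q"
  shows "\<exists>w'. swapped_middle M N F (u @ [A j] @ v) (u @ v) (p @ q) w'"
proof -
  from eq have "u @ v = p @ A i # q" by simp
  then show ?thesis
  proof (cases rule: append_eq_append_Cons_cases)
    case (left r)
    then have "swapped_middle M N F (u @ [A j] @ v) (p @ r @ [A j] @ v) (p @ q) (u @ v)"
      using swapped_middle_del_del[of M N p i r j v F] sw by simp
    then show ?thesis by (blast intro: swapped_middle_sym)
  next
    case (right r)
    then show ?thesis
      using swapped_middle_del_del[of M N u j r i q F] sw eq by auto
  qed
qed

lemma exists_swapped_middle_del_ins:
  assumes sw0: "shuffle_word M N (u @ [A j] @ v)" and sw2: "shuffle_word M N (s @ [X k] @ t)"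
    and eq: "u @ v = s @ t"
  shows "\<exists>w'. swapped_middle M N F (u @ [A j] @ v) (u @ v) (s @ [X k] @ t) w'"
  using eq
proof (cases rule: append_eq_append_cases)
  case (left r)
  have "shuffle_word M N (s @ [X k] @ r @ [A j] @ v)"
    using shuffle_word_distinct[OF sw0] shuffle_word_distinct[OF sw2] left
    by (intro shuffle_word_merge[OF sw0 sw2]) auto
  then have "swapped_middle M N F (u @ [A j] @ v) (s @ [X k] @ r @ [A j] @ v) (s @ [X k] @ t) (u @ v)"
    using swapped_middle_ins_del_right[of M N s k r j v F] left by simp
  then show ?thesis by (blast intro: swapped_middle_sym)
next
  case (right r)
  have "shuffle_word M N (u @ [A j] @ r @ [X k] @ t)"
    using shuffle_word_distinct[OF sw0] shuffle_word_distinct[OF sw2] right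
    by (intro shuffle_word_merge[OF sw0 sw2]) auto
  then have "swapped_middle M N F (u @ [A j] @ v) (u @ [A j] @ r @ [X k] @ t) (s @ [X k] @ t) (u @ v)"
    using swapped_middle_ins_del_left[of M N u j r k t F] right by simp
  then show ?thesis by (blast intro: swapped_middle_sym)
qed

text \<open>If the deleted letter immediately follows the inserted x_k, both steps are labelled x_k;
  this is the only configuration where no swap exists.\<close>

lemma exists_swapped_middle_ins_del:
  assumes sw1: "shuffle_word M N (s @ [X k] @ t)" and eq: "s @ [X k] @ t = u @ [A j] @ v"
    and k: "k \<notin> F"
    and ne: "step_label F (s @ t) (s @ [X k] @ t) \<noteq> step_label F (s @ [X k] @ t) (u @ v)"
  shows "\<exists>w'. swapped_middle M N F (s @ t) (s @ [X k] @ t) (u @ v) w'"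
proof -
  from eq have "s @ X k # t = u @ A j # v" by simp
  then show ?thesis
  proof (cases rule: append_eq_append_Cons_cases)
    case (left r)
    then show ?thesis
      using swapped_middle_ins_del_left[of M N u j r k t F] sw1 by auto
  next
    case (right r)
    then obtain r' where r': "r = X k # r'" "t = r' @ A j # v"
      by (cases r) auto
    show ?thesis
    proof (cases "r' = []")
      case False
      then show ?thesis
        using swapped_middle_ins_del_right[of M N s k r' j v F] sw1 right r' by auto
    next
      case True
      have "step_label F (s @ [X k] @ t) (u @ v) = X k"
        using deletion_step(3)[of M N "s @ [X k]" j v F] sw1 right r' True k
        by (simp add: del_label_X)
      moreover have "step_label F (s @ t) (s @ [X k] @ t) = X k"
        using insertion_step(2)[of M N s k t F] sw1 by simp
      ultimately show ?thesis using ne by simp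
    qed
  qed
qed

lemma exists_swapped_middle_ins_ins:
  assumes sw2: "shuffle_word M N (p @ [X l] @ q)" and eq: "p @ q = s @ [X k] @ t"
  shows "\<exists>w'. swapped_middle M N F (s @ t) (s @ [X k] @ t) (p @ [X l] @ q) w'"
proof -
  from eq have "p @ q = s @ X k # t" by simp
  then show ?thesis
  proof (cases rule: append_eq_append_Cons_cases)
    case (left r)
    then have "swapped_middle M N F (s @ t) (s @ r @ [X l] @ q) (p @ [X l] @ q) (s @ [X k] @ t)"
      using swapped_middle_ins_ins[of M N s k r l q F] sw2 by simp
    then show ?thesis by (blast intro: swapped_middle_sym)
  next
    case (right r)
    then show ?thesis
      using swapped_middle_ins_ins[of M N p l r k t F] sw2 by auto
  qed
qed

lemma exists_swapped_middle:
  assumes c1: "shuffle_cover M N w0 w1" and c2: "shuffle_cover M N w1 w2"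
    and F: "\<forall>k\<in>F. X k \<in> set w0"
    and ne: "step_label F w0 w1 \<noteq> step_label (F \<union> xa_indices w0 w1) w1 w2"
  shows "\<exists>w'. swapped_middle M N F w0 w1 w2 w'"
  using c1
proof (cases rule: shuffle_cover_cases)
  case del: (delete u j v)
  from c2 show ?thesis
  proof (cases rule: shuffle_cover_cases)
    case (delete p i q)
    then show ?thesis using exists_swapped_middle_del_del[of M N u j v p i q F] del by simp
  next
    case (insert s k t)
    then show ?thesis using exists_swapped_middle_del_ins[of M N u j v s k t F] del by simp
  qed
next
  case ins: (insert s k t)
  have "k \<notin> F" and no_xa: "xa_indices w0 w1 = {}"
    using F shuffle_word_distinct[OF ins(3)] insertion_step(3)[OF ins(3)] ins by auto
  from c2 show ?thesis
  proof (cases rule: shuffle_cover_cases)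
    case (delete u j v)
    then show ?thesis
      using exists_swapped_middle_ins_del[of M N s k t u j v F] ins \<open>k \<notin> F\<close> ne no_xa by simp
  next
    case (insert p l q)
    then show ?thesis using exists_swapped_middle_ins_ins[of M N p l q s k t F] ins by simp
  qed
qed

section \<open>Two consecutive labels determine the middle word\<close>

lemma del_label_eq_imp_same_deletion:
  assumes d: "distinct w" and w1: "w = u1 @ [A j1] @ v1" and w2: "w = u2 @ [A j2] @ v2"
    and eq: "del_label F u1 (A j1) = del_label F u2 (A j2)"
  shows "u1 @ v1 = u2 @ v2"
proof (cases rule: del_label_cases[of F u1 "A j1"])
  case 1
  with eq have "del_label F u2 (A j2) = A j1" by simp
  then have "j2 = j1"
    by (cases rule: del_label_cases[of F u2 "A j2"]) auto
  then have "u1 @ A j1 # v1 = u2 @ A j1 # v2" using w1 w2 by simp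
  moreover have "distinct (u1 @ A j1 # v1)" using d w1 by simp
  ultimately show ?thesis using distinct_split_unique by (metis append_Cons append_Nil)
next
  case (2 k)
  with eq have "del_label F u2 (A j2) = X k" by simp
  then have "trailing_x u2 = Some k"
    by (cases rule: del_label_cases[of F u2 "A j2"]) auto
  then obtain u1' u2' where u: "u1 = u1' @ [X k]" "u2 = u2' @ [X k]"
    using 2 by (blast dest: trailing_x_SomeD)
  have "distinct (u1' @ X k # A j1 # v1)" using d w1 u by simp
  moreover have "u1' @ X k # A j1 # v1 = u2' @ X k # A j2 # v2" using w1 w2 u by simp
  ultimately have "u1' = u2' \<and> A j1 # v1 = A j2 # v2" by (rule distinct_split_unique)
  then show ?thesis using u by simp
qed

lemma step_label_eq_cases:
  assumes c1: "shuffle_cover M N w w1" and c2: "shuffle_cover M N w w2"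
    and eq: "step_label F w w1 = step_label F w w2"
  obtains (same) "w1 = w2"
    | (insertions) s1 t1 s2 t2 k where "w = s1 @ t1" "w = s2 @ t2" "w1 = s1 @ [X k] @ t1" "w2 = s2 @ [X k] @ t2"
proof -
  have del_label_in: "step_label F w w' = del_label F u (A j) \<and> del_label F u (A j) \<in> set w"
    if "w = u @ [A j] @ v" "w' = u @ v" "shuffle_word M N (u @ [A j] @ v)" for w' u j v
    using deletion_step(3)[of M N u j v F] del_label_mem[of F u "A j"] that by auto
  have ins_notin: "step_label F w w' = X k \<and> X k \<notin> set w"
    if "w = u @ v" "w' = u @ [X k] @ v" "shuffle_word M N (u @ [X k] @ v)" for w' u k v
    using insertion_step(2)[of M N u k v F] shuffle_word_distinct[OF that(3)] that by auto
  from c1 show thesis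
  proof (cases rule: shuffle_cover_cases)
    case del1: (delete u1 j1 v1)
    from c2 show thesis
    proof (cases rule: shuffle_cover_cases)
      case del2: (delete u2 j2 v2)
      have "u1 @ v1 = u2 @ v2"
        using del_label_eq_imp_same_deletion[of w u1 j1 v1 u2 j2 v2 F] shuffle_word_distinct[OF del1(3)]
          del_label_in[OF del1] del_label_in[OF del2] del1 del2 eq by simp
      then show thesis using same del1 del2 by simp
    next
      case (insert u2 k2 v2)
      then show thesis using del_label_in[OF del1] ins_notin[OF insert] eq by simp
    qed
  next
    case ins1: (insert u1 k1 v1)
    from c2 show thesis
    proof (cases rule: shuffle_cover_cases)
      case (delete u2 j2 v2)
      then show thesis using del_label_in[OF delete] ins_notin[OF ins1] eq by simp
    next
      case ins2: (insert u2 k2 v2)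
      then show thesis using insertions ins_notin[OF ins1] ins_notin[OF ins2] ins1 eq by simp
    qed
  qed
qed

lemma shuffle_covers_same_letters:
  assumes c1: "shuffle_cover M N w1 w2" and c2: "shuffle_cover M N w1' w2"
    and same: "set w1 = set w1'"
  shows "w1 = w1' \<or> (\<exists>j. removeAll (A j) w1 = w2 \<and> removeAll (A j) w1' = w2)"
  using c1
proof (cases rule: shuffle_cover_removeAll_cases)
  case del1: (delete j1)
  from c2 show ?thesis
  proof (cases rule: shuffle_cover_removeAll_cases)
    case (delete j2)
    have "j2 = j1"
    proof (rule ccontr)
      assume "j2 \<noteq> j1"
      then have "A j1 \<in> set w2" using del1(1) same unfolding delete(2) by simp
      then show False unfolding del1(2) by simp
    qed
    then show ?thesis using del1 delete by auto
  next
    case (insert k2)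
    have "A j1 \<in> set w1'" using del1(1) same by simp
    then have "A j1 \<in> set w2" unfolding insert(2) by simp
    then show ?thesis unfolding del1(2) by simp
  qed
next
  case ins1: (insert k1)
  from c2 show ?thesis
  proof (cases rule: shuffle_cover_removeAll_cases)
    case (delete j2)
    have "A j2 \<in> set w1" using delete(1) same by simp
    then have "A j2 \<in> set w2" unfolding ins1(2) by simp
    then show ?thesis unfolding delete(2) by simp
  next
    case (insert k2)
    have "k2 = k1"
    proof (rule ccontr)
      assume "k2 \<noteq> k1"
      then have "X k2 \<in> set w1" using insert(1) unfolding ins1(2) by simp
      then show False using same unfolding insert(2) by simp
    qed
    then show ?thesis using ins1 insert by auto
  qed
qed

lemma moved_insertion_labels_differ:
  assumes c1: "shuffle_cover M N (s @ [X k] @ r @ t) w2" and c2: "shuffle_cover M N (s @ r @ [X k] @ t) w2"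
    and r: "r \<noteq> []" and F: "\<forall>k'\<in>F. X k' \<in> set (s @ r @ t)"
  shows "step_label F (s @ [X k] @ r @ t) w2 \<noteq> step_label F (s @ r @ [X k] @ t) w2"
proof -
  have sw1: "shuffle_word M N (s @ [X k] @ r @ t)" and sw1': "shuffle_word M N (s @ r @ [X k] @ t)"
    using c1 c2 by (simp_all add: shuffle_cover_words)
  have d1: "distinct (s @ [X k] @ r @ t)"
    using shuffle_word_distinct[OF sw1] .
  have "s @ [X k] @ r @ t \<noteq> s @ r @ [X k] @ t"
    using r d1 by (cases r) auto
  then obtain j where rm: "removeAll (A j) (s @ [X k] @ r @ t) = w2" "removeAll (A j) (s @ r @ [X k] @ t) = w2"
    using shuffle_covers_same_letters[OF c1 c2] by auto
  then have "removeAll (A j) (s @ [X k] @ r @ t) = removeAll (A j) (s @ r @ [X k] @ t)"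
    by (rule trans[OF _ sym])
  then have r_eq: "r = [A j]"
    using removeAll_moved_letter[OF d1 r] by simp
  have w2: "w2 = s @ [X k] @ t"
    using rm(1) r_eq d1 by auto
  have "k \<notin> F" using F d1 r_eq by auto
  then have "step_label F (s @ [X k] @ r @ t) w2 = X k"
    using deletion_step(3)[of M N "s @ [X k]" j t F] sw1 w2 r_eq
    by (simp add: del_label_X)
  moreover have "step_label F (s @ r @ [X k] @ t) w2 \<in> set (s @ [A j])"
    using deletion_step(3)[of M N s j "X k # t" F] del_label_mem[of F s "A j"]
      sw1' w2 r_eq by simp
  ultimately show ?thesis using d1 by auto
qed

lemma middle_unique:
  assumes c01: "shuffle_cover M N w0 w1" and c12: "shuffle_cover M N w1 w2"
    and c01': "shuffle_cover M N w0 w1'" and c12': "shuffle_cover M N w1' w2"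
    and F: "\<forall>k\<in>F. X k \<in> set w0"
    and l1: "step_label F w0 w1 = step_label F w0 w1'"
    and l2: "step_label (F \<union> xa_indices w0 w1) w1 w2 = step_label (F \<union> xa_indices w0 w1') w1' w2"
  shows "w1 = w1'"
  using c01 c01' l1
proof (cases rule: step_label_eq_cases)
  case (insertions s1 t1 s2 t2 k)
  then have "xa_indices w0 w1 = {}" "xa_indices w0 w1' = {}"
    using insertion_step(3)[of M N s1 k t1] insertion_step(3)[of M N s2 k t2]
      c01' c12 by (simp_all add: shuffle_cover_words)
  with l2 have l: "step_label F w1 w2 = step_label F w1' w2" by simp
  from insertions have "s1 @ t1 = s2 @ t2" by simp
  then show ?thesis
  proof (cases rule: append_eq_append_cases)
    case (left r)
    then show ?thesis
      using moved_insertion_labels_differ[of M N s2 k r t1 w2 F] c12 c12' F l insertions by auto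
  next
    case (right r)
    show ?thesis
    proof (cases "r = []")
      case False
      then show ?thesis
        using moved_insertion_labels_differ[of M N s1 k r t2 w2 F] c12 c12' F l insertions right by auto
    qed (use insertions right in simp)
  qed
qed

lemma shuffle_chains_length: "c \<in> shuffle_chains M N \<Longrightarrow> length c = Suc (M + N)"
  unfolding shuffle_chains_def by simp

lemma shuffle_chains_cover:
  "c \<in> shuffle_chains M N \<Longrightarrow> t < M + N \<Longrightarrow> shuffle_cover M N (c ! t) (c ! Suc t)"
  unfolding shuffle_chains_def by simp

lemma shuffle_word_top: "shuffle_word M N (shuffle_top N)"
  unfolding shuffle_word_def shuffle_top_def
  by (auto simp: distinct_map inj_on_def comp_def simp del: upt_Suc)

lemma shuffle_chains_word:
  assumes c: "c \<in> shuffle_chains M N" and t: "t \<le> M + N"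
  shows "shuffle_word M N (c ! t)"
proof (cases "t = M + N")
  case True
  then show ?thesis using c shuffle_word_top by (simp add: shuffle_chains_def)
next
  case False
  then show ?thesis using shuffle_cover_words(1)[OF shuffle_chains_cover[OF c]] t by simp
qed

lemma shuffle_labeling_length: "c \<in> shuffle_chains M N \<Longrightarrow> length (shuffle_labeling c) = M + N"
  unfolding shuffle_labeling_def by (simp add: shuffle_chains_length)

lemma shuffle_labeling_nth:
  "c \<in> shuffle_chains M N \<Longrightarrow> t < M + N \<Longrightarrow>
    shuffle_labeling c ! t = step_label (xa_before c t) (c ! t) (c ! Suc t)"
  unfolding shuffle_labeling_def by (simp add: shuffle_chains_length shuffle_label_at_eq_step_label)

lemma shuffle_chains_X_mono:
  assumes c: "c \<in> shuffle_chains M N" and "j \<le> j'" "j' \<le> M + N" and "X k \<in> set (c ! j)"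
  shows "X k \<in> set (c ! j')"
  using assms(2-4)
proof (induction j' rule: dec_induct)
  case (step m)
  then show ?case using shuffle_cover_X_mem[OF shuffle_chains_cover[OF c, of m]] by simp
qed simp

lemma shuffle_chains_A_antimono:
  assumes c: "c \<in> shuffle_chains M N" and "j \<le> j'" "j' \<le> M + N" and "A i \<in> set (c ! j')"
  shows "A i \<in> set (c ! j)"
  using assms(2-4)
proof (induction j' rule: dec_induct)
  case (step m)
  then show ?case using shuffle_cover_A_mem[OF shuffle_chains_cover[OF c, of m]] by simp
qed simp

lemma xa_before_X_mem:
  assumes c: "c \<in> shuffle_chains M N"
  shows "t \<le> M + N \<Longrightarrow> k \<in> xa_before c t \<Longrightarrow> X k \<in> set (c ! t)"
proof (induction t)
  case (Suc t)
  then show ?case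
    using shuffle_cover_X_mem[OF shuffle_chains_cover[OF c, of t]] xa_indices_X_mem
    by (auto simp: xa_before_Suc)
qed simp

lemma xa_before_eq_from:
  assumes "xa_before c' s = xa_before c s" and "\<And>j. s \<le> j \<Longrightarrow> j \<le> t \<Longrightarrow> c' ! j = c ! j"
    and "s \<le> t"
  shows "xa_before c' t = xa_before c t"
  using assms(3,2)
proof (induction t rule: dec_induct)
  case (step m)
  then show ?case by (simp add: xa_before_Suc)
qed (use assms(1) in simp)

lemma shuffle_chains_update:
  assumes c: "c \<in> shuffle_chains M N" and i: "Suc i < M + N"
    and cover: "shuffle_cover M N (c ! i) w" "shuffle_cover M N w (c ! Suc (Suc i))"
  shows "c[Suc i := w] \<in> shuffle_chains M N"
proof -
  have len: "length c = Suc (M + N)" using shuffle_chains_length[OF c] .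
  have "shuffle_cover M N (c[Suc i := w] ! t) (c[Suc i := w] ! Suc t)" if "t < M + N" for t
    using shuffle_chains_cover[OF c that] cover that len
    by (cases "t = i"; cases "t = Suc i") auto
  then show ?thesis
    using c i len by (simp add: shuffle_chains_def)
qed

lemma shuffle_labeling_swapped_middle:
  assumes c: "c \<in> shuffle_chains M N" and i: "Suc i < M + N"
    and sm: "swapped_middle M N (xa_before c i) (c ! i) (c ! Suc i) (c ! Suc (Suc i)) w"
  defines "c' \<equiv> c[Suc i := w]" and "L \<equiv> shuffle_labeling c"
  shows "c' \<in> shuffle_chains M N" and "shuffle_labeling c' = L[i := L ! Suc i, Suc i := L ! i]"
proof -
  have len: "length c = Suc (M + N)" using shuffle_chains_length[OF c] .
  show c': "c' \<in> shuffle_chains M N"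
    unfolding c'_def using shuffle_chains_update[OF c i] sm by (simp add: swapped_middle_def)
  have nth': "c' ! j = (if j = Suc i then w else c ! j)" for j
    unfolding c'_def using len i by (cases "j < length c") auto
  have before: "xa_before c' t = xa_before c t" if "t \<le> i" for t
    using that nth' by (intro xa_before_cong) auto
  have after: "xa_before c' t = xa_before c t" if "Suc (Suc i) \<le> t" "t \<le> M + N" for t
  proof (rule xa_before_eq_from[OF _ _ that(1)])
    show "xa_before c' (Suc (Suc i)) = xa_before c (Suc (Suc i))"
      using before[of i] nth' sm by (auto simp: xa_before_Suc swapped_middle_def)
  qed (use nth' in auto)
  show "shuffle_labeling c' = L[i := L ! Suc i, Suc i := L ! i]"
  proof (rule nth_equalityI)
    fix t assume "t < length (shuffle_labeling c')"
    then have t: "t < M + N" using shuffle_labeling_length[OF c'] by simp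
    consider "t < i" | "t = i" | "t = Suc i" | "Suc (Suc i) \<le> t" by linarith
    then show "shuffle_labeling c' ! t = L[i := L ! Suc i, Suc i := L ! i] ! t"
      using shuffle_labeling_nth[OF c' t] shuffle_labeling_nth[OF c] shuffle_labeling_length[OF c]
        before[of t] before[of i] after[of t] nth' t i sm
      unfolding L_def by cases (auto simp: xa_before_Suc swapped_middle_def)
  qed (simp add: shuffle_labeling_length[OF c'] shuffle_labeling_length[OF c] L_def)
qed

lemma shuffle_chains_swap_labels:
  assumes c: "c \<in> shuffle_chains M N" and i: "Suc i < M + N"
    and ne: "shuffle_labeling c ! i \<noteq> shuffle_labeling c ! Suc i"
  obtains w where "c[Suc i := w] \<in> shuffle_chains M N"
    and "shuffle_labeling (c[Suc i := w]) =
      (shuffle_labeling c)[i := shuffle_labeling c ! Suc i, Suc i := shuffle_labeling c ! i]"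
proof -
  have "\<exists>w. swapped_middle M N (xa_before c i) (c ! i) (c ! Suc i) (c ! Suc (Suc i)) w"
  proof (rule exists_swapped_middle)
    show "step_label (xa_before c i) (c ! i) (c ! Suc i) \<noteq>
        step_label (xa_before c i \<union> xa_indices (c ! i) (c ! Suc i)) (c ! Suc i) (c ! Suc (Suc i))"
      using ne i shuffle_labeling_nth[OF c, of i] shuffle_labeling_nth[OF c, of "Suc i"]
      by (simp add: xa_before_Suc)
  qed (use c i xa_before_X_mem[OF c, of i] shuffle_chains_cover[OF c] in auto)
  then show thesis using that shuffle_labeling_swapped_middle[OF c i] by blast
qed

lemma shuffle_chains_eq_if_agree_off_one:
  assumes c: "c \<in> shuffle_chains M N" and d: "d \<in> shuffle_chains M N"
    and l: "shuffle_labeling c = shuffle_labeling d"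
    and m: "0 < m" "m < M + N"
    and eq: "\<And>j. j \<le> M + N \<Longrightarrow> j \<noteq> m \<Longrightarrow> c ! j = d ! j"
  shows "c = d"
proof -
  obtain i where mi: "m = Suc i" using m by (cases m) auto
  have F: "xa_before d i = xa_before c i"
    using eq mi m by (intro xa_before_cong) auto
  have di: "d ! i = c ! i" and dm: "d ! Suc m = c ! Suc m"
    using eq[of i] eq[of "Suc m"] mi m by auto
  have "c ! m = d ! m"
  proof (rule middle_unique)
    show "shuffle_cover M N (c ! i) (d ! m)" "shuffle_cover M N (d ! m) (c ! Suc m)"
      using shuffle_chains_cover[OF d, of i] shuffle_chains_cover[OF d, of m] mi m di dm by auto
    show "step_label (xa_before c i) (c ! i) (c ! m) = step_label (xa_before c i) (c ! i) (d ! m)"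
      using l shuffle_labeling_nth[OF c, of i] shuffle_labeling_nth[OF d, of i] mi m F di by simp
    show "step_label (xa_before c i \<union> xa_indices (c ! i) (c ! m)) (c ! m) (c ! Suc m) =
        step_label (xa_before c i \<union> xa_indices (c ! i) (d ! m)) (d ! m) (c ! Suc m)"
      using l shuffle_labeling_nth[OF c, of m] shuffle_labeling_nth[OF d, of m] mi m F di dm
      by (simp add: xa_before_Suc)
  qed (use c mi m xa_before_X_mem[OF c, of i] shuffle_chains_cover[OF c] in auto)
  show ?thesis
  proof (rule nth_equalityI)
    show "length c = length d"
      using shuffle_chains_length[OF c] shuffle_chains_length[OF d] by simp
  next
    fix j assume "j < length c"
    then show "c ! j = d ! j"
      using eq \<open>c ! m = d ! m\<close> shuffle_chains_length[OF c] by (cases "j = m") auto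
  qed
qed

lemma shuffle_labeling_swap_unique:
  assumes c: "c \<in> shuffle_chains M N" and i: "Suc i < M + N"
    and ne: "shuffle_labeling c ! i \<noteq> shuffle_labeling c ! Suc i"
  defines "L \<equiv> shuffle_labeling c"
  shows "\<exists>!c'. c' \<in> shuffle_chains M N \<and> (\<forall>j\<le>M + N. j \<noteq> Suc i \<longrightarrow> c' ! j = c ! j) \<and>
           shuffle_labeling c' = L[i := L ! Suc i, Suc i := L ! i]"
proof -
  obtain w where w: "c[Suc i := w] \<in> shuffle_chains M N"
      "shuffle_labeling (c[Suc i := w]) = L[i := L ! Suc i, Suc i := L ! i]"
    using shuffle_chains_swap_labels[OF c i ne] L_def by blast
  show ?thesis
  proof (rule ex1I[of _ "c[Suc i := w]"])
    fix c' assume c': "c' \<in> shuffle_chains M N \<and> (\<forall>j\<le>M + N. j \<noteq> Suc i \<longrightarrow> c' ! j = c ! j) \<and>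
        shuffle_labeling c' = L[i := L ! Suc i, Suc i := L ! i]"
    show "c' = c[Suc i := w]"
      by (rule shuffle_chains_eq_if_agree_off_one[OF _ w(1), of _ "Suc i"]) (use c' w i in auto)
  qed (use w in auto)
qed

section \<open>Injectivity\<close>

fun label_rank :: "letter \<Rightarrow> nat" where
  "label_rank (A _) = 0"
| "label_rank (X k) = Suc k"

lemma nat_exists_switch:
  assumes "P a" and "\<not> P b" and "a \<le> b"
  shows "\<exists>s. a \<le> s \<and> s < b \<and> P s \<and> \<not> P (Suc s)"
  using assms(3,1,2)
proof (induction b rule: dec_induct)
  case (step m)
  then show ?case by (cases "P m") (auto intro: less_SucI)
qed simp

lemma del_label_rank_le:
  assumes sw: "shuffle_word M N (u @ [A j] @ v)" and k: "X k \<in> set v"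
  shows "label_rank (del_label F u (A j)) \<le> k"
proof (cases rule: del_label_cases[of F u "A j"])
  case (2 m)
  then obtain u' where "u = u' @ [X m]" by (blast dest: trailing_x_SomeD)
  moreover obtain v1 v2 where "v = v1 @ X k # v2" using split_list[OF k] by blast
  ultimately have "shuffle_word M N (u' @ [X m] @ (A j # v1) @ [X k] @ v2)" using sw by simp
  then have "m < k" by (rule shuffle_word_X_order)
  then show ?thesis using 2 by simp
qed simp

lemma shuffle_chains_filter_eq:
  assumes c: "c \<in> shuffle_chains M N" and ab: "a \<le> b" "b \<le> M + N"
    and stable: "\<And>m z. a \<le> m \<Longrightarrow> m \<le> b \<Longrightarrow> P z \<Longrightarrow> z \<in> set (c ! m) \<longleftrightarrow> z \<in> set (c ! a)"
  shows "filter P (c ! b) = filter P (c ! a)"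
  using ab(1)
proof (induction b rule: dec_induct)
  case (step m)
  have "filter P (c ! Suc m) = filter P (c ! m)"
  proof (rule shuffle_cover_filter_eq[OF shuffle_chains_cover[OF c]])
    show "m < M + N" using step.hyps ab(2) by simp
    fix z assume "z \<in> set (c ! m) \<union> set (c ! Suc m)" and "P z"
    moreover have "z \<in> set (c ! m) \<longleftrightarrow> z \<in> set (c ! a)" "z \<in> set (c ! Suc m) \<longleftrightarrow> z \<in> set (c ! a)"
      using stable[of m z] stable[of "Suc m" z] step.hyps \<open>P z\<close> by simp_all
    ultimately show "z \<in> set (c ! m) \<inter> set (c ! Suc m)" by blast
  qed
  with step.IH show ?case by simp
qed simp

lemma shuffle_chains_deletes_A_before_X:
  assumes c: "c \<in> shuffle_chains M N" and a: "a \<le> M + N"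
    and ca: "c ! a = s @ [X k] @ t" and js: "A j \<in> set s"
  obtains s' u v where "a \<le> s'" "s' < M + N" "c ! s' = u @ [A j] @ v" "c ! Suc s' = u @ v"
    and "X k \<in> set v"
proof -
  define P where "P = (\<lambda>z. z = A j \<or> z = X k)"
  have "A j \<notin> set (c ! (M + N))"
    using c by (auto simp: shuffle_chains_def shuffle_top_def)
  then obtain s' where s': "a \<le> s'" "s' < M + N" "A j \<in> set (c ! s')" "A j \<notin> set (c ! Suc s')"
    using nat_exists_switch[of "\<lambda>m. A j \<in> set (c ! m)" a "M + N"] js ca a by auto
  \<comment> \<open>A j stays in front of X k as long as it is present\<close>
  have "filter P (c ! s') = filter P (c ! a)"
  proof (rule shuffle_chains_filter_eq[OF c s'(1)])
    fix m z assume m: "a \<le> m" "m \<le> s'" and "P z"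
    then show "z \<in> set (c ! m) \<longleftrightarrow> z \<in> set (c ! a)"
      using shuffle_chains_A_antimono[OF c m(2) _ s'(3)] shuffle_chains_X_mono[OF c m(1), of k]
        s' ca js unfolding P_def by auto
  qed (use s' in simp)
  also have "\<dots> = [A j, X k]"
  proof -
    obtain s1 s2 where s: "s = s1 @ A j # s2" using split_list[OF js] by blast
    have "distinct (c ! a)" using shuffle_word_distinct[OF shuffle_chains_word[OF c a]] .
    then have "filter P s1 = []" "filter P s2 = []" "filter P t = []"
      using ca s unfolding P_def by (auto simp: filter_empty_conv)
    then show ?thesis using ca s by (simp add: P_def)
  qed
  finally have order: "filter P (c ! s') = [A j, X k]" .
  from shuffle_chains_cover[OF c s'(2)] show thesis
  proof (cases rule: shuffle_cover_cases)
    case (delete u j' v)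
    have "j' = j" using s'(3,4) delete(1,2) by auto
    have split: "filter P u @ A j # filter P v = [A j, X k]"
      using order delete \<open>j' = j\<close> by (simp add: P_def)
    have "A j \<notin> set (filter P u)"
      using shuffle_word_distinct[OF delete(3)] \<open>j' = j\<close> by auto
    then have "filter P u = []" using split by (cases "filter P u") auto
    then have "X k \<in> set (filter P v)" using split by simp
    then show thesis using that s' delete \<open>j' = j\<close> by simp
  next
    case (insert u k' v)
    then show thesis using s'(3,4) by simp
  qed
qed

lemma shuffle_chains_insertion_prefix_no_A:
  assumes c: "c \<in> shuffle_chains M N" and i: "i < M + N"
    and ins: "c ! Suc i = s @ [X k] @ t"
    and later: "\<And>j. i < j \<Longrightarrow> j < M + N \<Longrightarrow> Suc k \<le> label_rank (shuffle_labeling c ! j)"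
  shows "A j \<notin> set s"
proof
  assume "A j \<in> set s"
  with c ins obtain s' u v where s': "Suc i \<le> s'" "s' < M + N"
    and del: "c ! s' = u @ [A j] @ v" "c ! Suc s' = u @ v" and k: "X k \<in> set v"
    using i by (elim shuffle_chains_deletes_A_before_X) auto
  have sw: "shuffle_word M N (u @ [A j] @ v)"
    using shuffle_chains_word[OF c, of s'] s'(2) del(1) by simp
  have "shuffle_labeling c ! s' = del_label (xa_before c s') u (A j)"
    using shuffle_labeling_nth[OF c s'(2)] deletion_step(3)[OF sw] del by simp
  then have "label_rank (shuffle_labeling c ! s') \<le> k"
    using del_label_rank_le[OF sw k] by simp
  then show False using later[of s'] s' by simp
qed

lemma shuffle_word_X_cannot_pass_X:
  assumes "shuffle_word M N (s @ r @ [X k] @ t)" and "shuffle_word M N (s @ [X k] @ r @ t)"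
    and "\<forall>j. A j \<notin> set r"
  shows "r = []"
proof (cases r)
  case (Cons z r')
  then obtain m where z: "z = X m" using assms(3) by (cases z) auto
  have "m < k"
    using shuffle_word_X_order[of M N s m r' k t] assms(1) Cons z by simp
  moreover have "k < m"
    using shuffle_word_X_order[of M N s k "[]" m "r' @ t"] assms(2) Cons z by simp
  ultimately show ?thesis by simp
qed

lemma insertion_position_unique:
  assumes w1: "shuffle_word M N (s1 @ [X k] @ t1)" and w2: "shuffle_word M N (s2 @ [X k] @ t2)"
    and e: "s1 @ t1 = s2 @ t2" and no_A: "\<forall>j. A j \<notin> set s1" "\<forall>j. A j \<notin> set s2"
  shows "s1 = s2"
  using e
proof (cases rule: append_eq_append_cases)
  case (left r)
  then show ?thesis
    using shuffle_word_X_cannot_pass_X[of M N s2 r k t1] w1 w2 no_A(1) by simp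
next
  case (right r)
  then show ?thesis
    using shuffle_word_X_cannot_pass_X[of M N s1 r k t2] w1 w2 no_A(2) by simp
qed

lemma shuffle_labeling_inj_on_sorted:
  assumes c: "c \<in> shuffle_chains M N" and d: "d \<in> shuffle_chains M N"
    and l: "shuffle_labeling c = shuffle_labeling d"
    and sorted: "sorted (map label_rank (shuffle_labeling c))"
  shows "c = d"
proof (rule ccontr)
  assume "c \<noteq> d"
  then have "\<exists>t \<le> M + N. c ! t \<noteq> d ! t"
    using shuffle_chains_length[OF c] shuffle_chains_length[OF d]
    by (metis less_Suc_eq_le nth_equalityI)
  then obtain t where t: "t \<le> M + N" "c ! t \<noteq> d ! t" and before: "\<forall>j<t. c ! j = d ! j"
    using ex_least_nat_le[of "\<lambda>j. c ! j \<noteq> d ! j"] by (metis le_trans)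
  obtain i where ti: "t = Suc i"
    using t c d by (cases t) (auto simp: shuffle_chains_def)
  have i: "i < M + N" using t ti by simp
  have F: "xa_before d i = xa_before c i"
    using before ti by (intro xa_before_cong) auto
  have "shuffle_cover M N (c ! i) (c ! t)" "shuffle_cover M N (c ! i) (d ! t)"
    using shuffle_chains_cover[OF c i] shuffle_chains_cover[OF d i] before ti by auto
  moreover have "step_label (xa_before c i) (c ! i) (c ! t) = step_label (xa_before c i) (c ! i) (d ! t)"
    using l shuffle_labeling_nth[OF c i] shuffle_labeling_nth[OF d i] F before ti by simp
  ultimately show False
  proof (cases rule: step_label_eq_cases)
    case (insertions s1 t1 s2 t2 k)
    have sw: "shuffle_word M N (s1 @ [X k] @ t1)" "shuffle_word M N (s2 @ [X k] @ t2)"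
      using shuffle_chains_word[OF c t(1)] shuffle_chains_word[OF d t(1)] insertions by auto
    have "shuffle_labeling c ! i = X k"
      using shuffle_labeling_nth[OF c i] insertion_step(2)[OF sw(1)] insertions ti by simp
    then have later: "Suc k \<le> label_rank (shuffle_labeling c ! j)" if "i < j" "j < M + N" for j
      using sorted_nth_mono[OF sorted, of i j] that shuffle_labeling_length[OF c] by simp
    have "\<forall>j. A j \<notin> set s1" "\<forall>j. A j \<notin> set s2"
      using shuffle_chains_insertion_prefix_no_A[OF c i, of s1 k t1]
        shuffle_chains_insertion_prefix_no_A[OF d i, of s2 k t2] later l insertions ti by auto
    then have "s1 = s2"
      using insertion_position_unique[OF sw] insertions by simp
    then show False using insertions t(2) by simp
  qed (use t(2) in simp)
qed

fun inversions :: "nat list \<Rightarrow> nat" where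
  "inversions [] = 0"
| "inversions (x # xs) = length (filter (\<lambda>y. y < x) xs) + inversions xs"

lemma inversions_swap_less:
  "Suc i < length r \<Longrightarrow> r ! Suc i < r ! i \<Longrightarrow> inversions (r[i := r ! Suc i, Suc i := r ! i]) < inversions r"
proof (induction r arbitrary: i)
  case (Cons x xs)
  show ?case
  proof (cases i)
    case 0
    then obtain y ys where "xs = y # ys" using Cons.prems by (cases xs) auto
    with 0 Cons.prems show ?thesis by simp
  next
    case (Suc i')
    have i': "Suc i' < length xs" "xs ! Suc i' < xs ! i'" using Cons.prems Suc by auto
    have "mset (xs[i' := xs ! Suc i', Suc i' := xs ! i']) = mset xs"
      using mset_swap[of "Suc i'" xs i'] i'(1) by simp
    then have "length (filter P (xs[i' := xs ! Suc i', Suc i' := xs ! i'])) = length (filter P xs)" for P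
      by (metis mset_filter size_mset)
    then show ?thesis using Cons.IH[OF i'] Suc by simp
  qed
qed simp

lemma shuffle_labeling_inj_on: "inj_on shuffle_labeling (shuffle_chains M N)"
proof (rule inj_onI)
  fix c d assume "c \<in> shuffle_chains M N" "d \<in> shuffle_chains M N" "shuffle_labeling c = shuffle_labeling d"
  then show "c = d"
  proof (induction "inversions (map label_rank (shuffle_labeling c))" arbitrary: c d rule: less_induct)
    case less
    note c = less.prems(1) and d = less.prems(2) and l = less.prems(3)
    define L where "L = shuffle_labeling c"
    have len: "length L = M + N" using shuffle_labeling_length[OF c] L_def by simp
    show "c = d"
    proof (cases "\<exists>i. Suc i < M + N \<and> label_rank (L ! Suc i) < label_rank (L ! i)")
      case True
      then obtain i where i: "Suc i < M + N" "label_rank (L ! Suc i) < label_rank (L ! i)" by blast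
      then have ne: "L ! i \<noteq> L ! Suc i" by auto
      obtain w1 where w1: "c[Suc i := w1] \<in> shuffle_chains M N"
          "shuffle_labeling (c[Suc i := w1]) = L[i := L ! Suc i, Suc i := L ! i]"
        using shuffle_chains_swap_labels[OF c i(1)] ne L_def by blast
      obtain w2 where w2: "d[Suc i := w2] \<in> shuffle_chains M N"
          "shuffle_labeling (d[Suc i := w2]) = L[i := L ! Suc i, Suc i := L ! i]"
        using shuffle_chains_swap_labels[OF d i(1)] ne L_def l by metis
      have "inversions (map label_rank (L[i := L ! Suc i, Suc i := L ! i]))
          < inversions (map label_rank L)"
        using inversions_swap_less[of i "map label_rank L"] i len by (simp add: map_update)
      then have "c[Suc i := w1] = d[Suc i := w2]"
        using less.hyps w1 w2 L_def by metis
      then have "c ! j = d ! j" if "j \<le> M + N" "j \<noteq> Suc i" for j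
        using that by (metis nth_list_update_neq)
      then show "c = d"
        using shuffle_chains_eq_if_agree_off_one[OF c d l, of "Suc i"] i by simp
    next
      case False
      then have "sorted (map label_rank L)"
        unfolding sorted_iff_nth_Suc using len by auto
      then show "c = d"
        using shuffle_labeling_inj_on_sorted[OF c d l] L_def by simp
    qed
  qed
qed

theorem proposition3p3:
  fixes M N :: nat
  shows "S_labeling (shuffle_chains M N) (M + N) shuffle_labeling"
  unfolding S_labeling_def is_labeling_def
proof (intro conjI ballI impI)
  fix c i assume c: "c \<in> shuffle_chains M N" and i: "i \<in> {1..M + N - 1}"
    and ne: "shuffle_labeling c ! (i - 1) \<noteq> shuffle_labeling c ! i"
  then obtain i0 where "i = Suc i0" "Suc i0 < M + N" by (cases i) auto
  then show "\<exists>!c'. c' \<in> shuffle_chains M N \<and> (\<forall>j\<le>M + N. j \<noteq> i \<longrightarrow> c' ! j = c ! j) \<and>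
      shuffle_labeling c' = (shuffle_labeling c)[i - 1 := shuffle_labeling c ! i, i := shuffle_labeling c ! (i - 1)]"
    using shuffle_labeling_swap_unique[OF c] ne by simp
qed (simp_all add: shuffle_labeling_length shuffle_labeling_inj_on)

end
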